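(* Let $a>0$, $l>0$, $b,c\in\mathbb R$, and suppose there is $c_0>0$ with $(ak^2+bk+c)^{1/2}\ge l+c_0k$ for all integers $k\ge1$. Then $$\lim_{s\to0^+}\sum_{k=1}^\infty\left(\frac1{\big((ak^2+bk+c)^{1/2}-l\big)^s}-\frac1{\big((ak^2+bk+c)^{1/2}+l\big)^s}\right)=\frac{2l}{\sqrt a}.$$ *)

theory Defs
  imports "HOL-Analysis.Analysis"
begin

end

theory Submission
  imports Defs
begin

(* Write r_k = sqrt(a k^2 + b k + c); then r_k = sqrt a * k + O(1). By the mean value theorem
   the k-th term (r_k - l)^-s - (r_k + l)^-s is about 2 l s r_k^(-s-1), and so is the telescoping
   difference (2 l / sqrt a) (x_k^-s - x_(k+1)^-s) along an arithmetic progression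
   x_k = x + sqrt a * k. Choosing x so that the progression lies just above, respectively (from
   some index K on) just below, the sequence r_k bounds the series from both sides by
   (2 l / sqrt a) x^-s plus finitely many terms, each of which tends to 0 as s -> 0+. *)

lemma powr_neg_diff_bounds:
  fixes s x y :: real
  assumes "s > 0" and "0 < x" and "x < y"
  shows "s * (y - x) * y powr (-s-1) \<le> x powr -s - y powr -s"
    and "x powr -s - y powr -s \<le> s * (y - x) * x powr (-s-1)"
proof -
  obtain z where z: "x < z" "z < y"
    and mvt: "y powr -s - x powr -s = (y - x) * (-s * z powr (-s-1))"
    using MVT2[OF \<open>x < y\<close>, of "\<lambda>t. t powr -s" "\<lambda>t. -s * t powr (-s-1)"]
      has_real_derivative_powr[of _ "-s"] \<open>0 < x\<close> by force
  have diff: "x powr -s - y powr -s = s * (y - x) * z powr (-s-1)"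
    using mvt by (simp add: algebra_simps)
  have "y powr (-s-1) \<le> z powr (-s-1)" and "z powr (-s-1) \<le> x powr (-s-1)"
    using powr_mono2'[of "-s-1"] z assms by auto
  moreover have "s * (y - x) \<ge> 0" using assms by simp
  ultimately show "s * (y - x) * y powr (-s-1) \<le> x powr -s - y powr -s"
    and "x powr -s - y powr -s \<le> s * (y - x) * x powr (-s-1)"
    unfolding diff by (simp_all add: mult_left_mono)
qed

lemma powr_gap_ge_telescope:
  fixes s l h r x :: real
  assumes "s > 0" "l > 0" "h > 0" "l < r" "r + l \<le> x"
  shows "2 * l / h * (x powr -s - (x + h) powr -s) \<le> (r - l) powr -s - (r + l) powr -s"
proof -
  have "2 * l / h * (x powr -s - (x + h) powr -s) \<le> 2 * l / h * (s * h * x powr (-s-1))"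
    using powr_neg_diff_bounds(2)[of s x "x + h"] assms by (intro mult_left_mono) auto
  also have "\<dots> = s * (2 * l) * x powr (-s-1)"
    using \<open>h > 0\<close> by simp
  also have "\<dots> \<le> s * (2 * l) * (r + l) powr (-s-1)"
    using assms by (intro mult_left_mono powr_mono2') auto
  also have "\<dots> \<le> (r - l) powr -s - (r + l) powr -s"
    using powr_neg_diff_bounds(1)[of s "r - l" "r + l"] assms by simp
  finally show ?thesis .
qed

lemma powr_gap_le_telescope:
  fixes s l h r x :: real
  assumes "s > 0" "l > 0" "h > 0" "0 < x" "x + h \<le> r - l"
  shows "(r - l) powr -s - (r + l) powr -s \<le> 2 * l / h * (x powr -s - (x + h) powr -s)"
proof -
  have "0 < r - l" "r - l < r + l"
    using assms by auto
  then have "(r - l) powr -s - (r + l) powr -s \<le> s * (2 * l) * (r - l) powr (-s-1)"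
    using powr_neg_diff_bounds(2)[of s "r - l" "r + l"] \<open>s > 0\<close> by simp
  also have "\<dots> \<le> s * (2 * l) * (x + h) powr (-s-1)"
    using assms by (intro mult_left_mono powr_mono2') auto
  also have "\<dots> = 2 * l / h * (s * h * (x + h) powr (-s-1))"
    using \<open>h > 0\<close> by simp
  also have "\<dots> \<le> 2 * l / h * (x powr -s - (x + h) powr -s)"
    using powr_neg_diff_bounds(1)[of s x "x + h"] assms by (intro mult_left_mono) auto
  finally show ?thesis .
qed

lemma powr_gap_nonneg:
  fixes s l r :: real
  assumes "s > 0" "l > 0" "l < r"
  shows "0 \<le> (r - l) powr -s - (r + l) powr -s"
proof -
  have "0 \<le> s * ((r + l) - (r - l)) * (r + l) powr (-s-1)"
    using assms by simp
  also have "\<dots> \<le> (r - l) powr -s - (r + l) powr -s"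
    using powr_neg_diff_bounds(1)[of s "r - l" "r + l"] assms by simp
  finally show ?thesis .
qed

lemma arith_prog_powr_telescope_sums:
  fixes x0 h s :: real
  assumes "x0 > 0" "h > 0" "s > 0"
  shows "(\<lambda>k. (x0 + h * real k) powr -s - (x0 + h * real k + h) powr -s) sums x0 powr -s"
proof -
  have "filterlim (\<lambda>k. x0 + h * real k) at_top sequentially"
    by (intro filterlim_tendsto_add_at_top[OF tendsto_const]
        filterlim_tendsto_pos_mult_at_top[OF tendsto_const \<open>h > 0\<close> filterlim_real_sequentially])
  then have "(\<lambda>k. (x0 + h * real k) powr -s) \<longlonglongrightarrow> 0"
    using tendsto_neg_powr[of "-s"] \<open>s > 0\<close> by simp
  from telescope_sums'[OF this] show ?thesis
    by (simp add: algebra_simps)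
qed

lemma powr_gap_series_bounds:
  fixes r :: "nat \<Rightarrow> real" and h l D s :: real and K :: nat
  assumes "h > 0" "l > 0" "s > 0" "\<And>k. l < r k" "\<And>k. \<bar>r k - h * real k\<bar> \<le> D"
    and "h + D + l < h * real K"
  defines "G \<equiv> \<lambda>k. (r k - l) powr -s - (r k + l) powr -s"
  shows "summable G"
    and "2 * l / h * (D + l) powr -s \<le> (\<Sum>k. G k)"
    and "(\<Sum>k. G k) \<le> (\<Sum>k<K. G k) + 2 * l / h * (h * real K - h - D - l) powr -s"
proof -
  define tel where "tel x k = 2 * l / h * ((x + h * real k) powr -s - (x + h * real k + h) powr -s)"
    for x :: real and k :: nat
  have tel_sums: "tel x sums (2 * l / h * x powr -s)" if "x > 0" for x
    unfolding tel_def using sums_mult[OF arith_prog_powr_telescope_sums] that assms(1,3) by blast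
  have "D \<ge> 0"
    using assms(5)[of 0] by linarith
  define x0 where "x0 = D + l"
  define x1 where "x1 = h * real K - h - D - l"
  have "x0 > 0" "x1 > 0"
    using \<open>D \<ge> 0\<close> assms(2,6) by (simp_all add: x0_def x1_def)
  have head: "tel x0 k \<le> G k" for k
    unfolding tel_def G_def x0_def
    using powr_gap_ge_telescope[of s l h "r k" "D + l + h * real k"] assms(1-4) assms(5)[of k]
    by (simp add: abs_le_iff add.commute)
  have tail: "G (k + K) \<le> tel x1 k" for k
  proof -
    have "x1 + h * real k + h \<le> r (k + K) - l"
      using assms(5)[of "k + K"] by (simp add: x1_def abs_le_iff algebra_simps)
    moreover have "0 < x1 + h * real k"
      using \<open>x1 > 0\<close> \<open>h > 0\<close> by (simp add: add_pos_nonneg)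
    ultimately show ?thesis
      unfolding tel_def G_def using powr_gap_le_telescope assms(1-3) by blast
  qed
  have "norm (G (k + K)) \<le> tel x1 k" for k
    using tail powr_gap_nonneg assms(2-4) by (simp add: G_def)
  then have summable_tail: "summable (\<lambda>k. G (k + K))"
    by (rule summable_comparison_test'[OF sums_summable[OF tel_sums[OF \<open>x1 > 0\<close>]]])
  then show "summable G"
    by (simp only: summable_iff_shift)
  then show "2 * l / h * (D + l) powr -s \<le> (\<Sum>k. G k)"
    using sums_le[OF head tel_sums[OF \<open>x0 > 0\<close>] summable_sums] by (simp add: x0_def)
  have "(\<Sum>k. G (k + K)) \<le> 2 * l / h * x1 powr -s"
    using sums_le[OF tail summable_sums[OF summable_tail] tel_sums[OF \<open>x1 > 0\<close>]] .
  then show "(\<Sum>k. G k) \<le> (\<Sum>k<K. G k) + 2 * l / h * (h * real K - h - D - l) powr -s"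
    using suminf_split_initial_segment[OF \<open>summable G\<close>, of K] by (simp add: x1_def)
qed

theorem sum_powr_gap_tendsto:
  fixes r :: "nat \<Rightarrow> real" and h l D :: real
  assumes "h > 0" "l > 0" "\<And>k. l < r k" "\<And>k. \<bar>r k - h * real k\<bar> \<le> D"
  defines "G \<equiv> \<lambda>s k. (r k - l) powr -s - (r k + l) powr -s"
  shows "(\<forall>\<^sub>F s in at_right 0. summable (G s)) \<and> ((\<lambda>s. \<Sum>k. G s k) \<longlongrightarrow> 2 * l / h) (at_right 0)"
proof -
  obtain K :: nat where "(h + D + l) / h < real K"
    using reals_Archimedean2 by blast
  then have "h + D + l < h * real K"
    using \<open>h > 0\<close> by (simp add: field_simps)
  note bounds = powr_gap_series_bounds[OF assms(1,2) _ assms(3,4) this]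
  define x0 where "x0 = D + l"
  define x1 where "x1 = h * real K - h - D - l"
  have "x0 > 0" "x1 > 0"
    using assms(2) assms(4)[of 0] \<open>h + D + l < h * real K\<close> by (simp_all add: x0_def x1_def)
  have G_tendsto_0: "((\<lambda>s. G s k) \<longlongrightarrow> 0) (at_right 0)" for k
  proof -
    have "((\<lambda>s. G s k) \<longlongrightarrow> (r k - l) powr -0 - (r k + l) powr -0) (at_right 0)"
      unfolding G_def using assms(2) assms(3)[of k] by (intro tendsto_intros) auto
    then show ?thesis
      using assms(2) assms(3)[of k] by simp
  qed
  have "((\<lambda>s. 2 * l / h * x0 powr -s) \<longlongrightarrow> 2 * l / h * x0 powr -0) (at_right 0)"
    using \<open>x0 > 0\<close> by (intro tendsto_intros) auto
  then have lim_lower: "((\<lambda>s. 2 * l / h * x0 powr -s) \<longlongrightarrow> 2 * l / h) (at_right 0)"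
    using \<open>x0 > 0\<close> by simp
  have "((\<lambda>s. (\<Sum>k<K. G s k) + 2 * l / h * x1 powr -s)
      \<longlongrightarrow> (\<Sum>k<K. 0) + 2 * l / h * x1 powr -0) (at_right 0)"
    using \<open>x1 > 0\<close> by (intro tendsto_intros G_tendsto_0) auto
  then have lim_upper: "((\<lambda>s. (\<Sum>k<K. G s k) + 2 * l / h * x1 powr -s) \<longlongrightarrow> 2 * l / h) (at_right 0)"
    using \<open>x1 > 0\<close> by simp
  have pos: "\<forall>\<^sub>F s in at_right (0::real). s > 0"
    by (rule eventually_at_right_less)
  show ?thesis
  proof
    show "\<forall>\<^sub>F s in at_right 0. summable (G s)"
      using pos by eventually_elim (use bounds(1) in \<open>simp add: G_def\<close>)
    show "((\<lambda>s. \<Sum>k. G s k) \<longlongrightarrow> 2 * l / h) (at_right 0)"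
    proof (rule tendsto_sandwich[OF _ _ lim_lower lim_upper])
      show "\<forall>\<^sub>F s in at_right 0. 2 * l / h * x0 powr -s \<le> (\<Sum>k. G s k)"
        using pos by eventually_elim (use bounds(2) in \<open>simp add: G_def x0_def\<close>)
      show "\<forall>\<^sub>F s in at_right 0. (\<Sum>k. G s k) \<le> (\<Sum>k<K. G s k) + 2 * l / h * x1 powr -s"
        using pos by eventually_elim (use bounds(3) in \<open>simp add: G_def x1_def\<close>)
    qed
  qed
qed

lemma sqrt_quadratic_near_linear:
  fixes a b c x :: real
  assumes "a > 0" "x \<ge> 1" "0 \<le> a * x\<^sup>2 + b * x + c"
  shows "\<bar>sqrt (a * x\<^sup>2 + b * x + c) - sqrt a * x\<bar> \<le> (\<bar>b\<bar> + \<bar>c\<bar>) / sqrt a"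
proof -
  define q where "q = a * x\<^sup>2 + b * x + c"
  have "0 < sqrt a * x"
    using assms by simp
  moreover have "0 \<le> sqrt q"
    using assms(3) by (simp add: q_def)
  ultimately have den: "sqrt a * x \<le> sqrt q + sqrt a * x" "0 < sqrt q + sqrt a * x"
    by linarith+
  have "(sqrt q - sqrt a * x) * (sqrt q + sqrt a * x) = b * x + c"
    using assms by (simp add: q_def algebra_simps power2_eq_square flip: power2_eq_square)
  then have "\<bar>sqrt q - sqrt a * x\<bar> * (sqrt q + sqrt a * x) = \<bar>b * x + c\<bar>"
    using den by (metis abs_mult abs_of_pos)
  then have "\<bar>sqrt q - sqrt a * x\<bar> = \<bar>b * x + c\<bar> / (sqrt q + sqrt a * x)"
    using den by (simp add: eq_divide_eq)
  also have "\<dots> \<le> (\<bar>b\<bar> + \<bar>c\<bar>) * x / (sqrt a * x)"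
  proof (rule frac_le)
    show "\<bar>b * x + c\<bar> \<le> (\<bar>b\<bar> + \<bar>c\<bar>) * x"
      using assms(2) abs_triangle_ineq[of "b * x" c] mult_left_mono[of 1 x "\<bar>c\<bar>"]
      by (simp add: abs_mult distrib_right)
  qed (use den \<open>0 < sqrt a * x\<close> assms(2) in auto)
  also have "\<dots> = (\<bar>b\<bar> + \<bar>c\<bar>) / sqrt a"
    using assms(2) by simp
  finally show ?thesis
    by (simp add: q_def)
qed

theorem mainTheorem13:
  fixes a l b c c0 :: real
  assumes "a > 0" and "l > 0" and "c0 > 0"
    and "\<And>k::nat. k \<ge> 1 \<Longrightarrow> sqrt (a * real k ^ 2 + b * real k + c) \<ge> l + c0 * real k"
  defines "F \<equiv> (\<lambda>s::real. \<lambda>k::nat.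
      1 / (sqrt (a * real (Suc k) ^ 2 + b * real (Suc k) + c) - l) powr s
    - 1 / (sqrt (a * real (Suc k) ^ 2 + b * real (Suc k) + c) + l) powr s)"
  shows "(\<forall>\<^sub>F s in at_right 0. summable (F s))
     \<and> ((\<lambda>s. \<Sum>k. F s k) \<longlongrightarrow> 2 * l / sqrt a) (at_right 0)"
proof -
  define r where "r k = sqrt (a * real (Suc k) ^ 2 + b * real (Suc k) + c)" for k
  have r_gt: "l < r k" for k
  proof -
    have "0 < c0 * real (Suc k)"
      using \<open>c0 > 0\<close> by simp
    then show ?thesis
      using assms(4)[of "Suc k"] unfolding r_def by linarith
  qed
  have r_near_Suc: "\<bar>r k - sqrt a * real (Suc k)\<bar> \<le> (\<bar>b\<bar> + \<bar>c\<bar>) / sqrt a" for k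
  proof -
    have "0 < a * real (Suc k) ^ 2 + b * real (Suc k) + c"
      using r_gt[of k] \<open>l > 0\<close> unfolding r_def by (metis order.strict_trans real_sqrt_gt_0_iff)
    then show ?thesis
      unfolding r_def by (intro sqrt_quadratic_near_linear) (use \<open>a > 0\<close> in auto)
  qed
  have r_near: "\<bar>r k - sqrt a * real k\<bar> \<le> (\<bar>b\<bar> + \<bar>c\<bar>) / sqrt a + sqrt a" for k
  proof -
    have "sqrt a * real (Suc k) = sqrt a * real k + sqrt a" "0 < sqrt a"
      using \<open>a > 0\<close> by (simp_all add: algebra_simps)
    then show ?thesis
      using r_near_Suc[of k] by linarith
  qed
  have "F = (\<lambda>s k. (r k - l) powr -s - (r k + l) powr -s)"
    unfolding F_def r_def by (simp add: powr_minus_divide)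
  then show ?thesis
    using sum_powr_gap_tendsto[of "sqrt a" l r, OF _ \<open>l > 0\<close> r_gt r_near] \<open>a > 0\<close> by simp
qed

end
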